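(* For every $n\geq 1$ there exists a generalized NFA $M$ over a binary alphabet with $n$ states, each of which is both initial and final, such that the minimal (complete) DFA accepting $L(M)$ has $2^n$ states.
   Context: A generalized NFA is a quintuple $M=(Q,\Sigma,\delta,I,F)$ with finite state set $Q$, transition function $\delta: Q\times\Sigma\to 2^Q$, a set of initial states $I\subseteq Q$ and final states $F\subseteq Q$; it accepts $w$ iff $\delta(I,w)\cap F\neq\emptyset$. DFAs are required to be complete; the minimal DFA of a regular language is the complete DFA with fewest states accepting it. *)

theory Defs
  imports Main
begin

record nfa =
  nstates :: "nat set"
  ndelta  :: "nat \<Rightarrow> bool \<Rightarrow> nat set"
  ninit   :: "nat set"
  nfinal  :: "nat set"

definition is_nfa :: "nfa \<Rightarrow> bool" where
  "is_nfa M \<longleftrightarrow> finite (nstates M)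
     \<and> (\<forall>q\<in>nstates M. \<forall>a. ndelta M q a \<subseteq> nstates M)
     \<and> ninit M \<subseteq> nstates M \<and> nfinal M \<subseteq> nstates M"

fun ndelta_hat :: "nfa \<Rightarrow> nat set \<Rightarrow> bool list \<Rightarrow> nat set" where
  "ndelta_hat M S [] = S"
| "ndelta_hat M S (a # w) = ndelta_hat M (\<Union>q\<in>S. ndelta M q a) w"

definition nfa_lang :: "nfa \<Rightarrow> bool list set" where
  "nfa_lang M = {w. ndelta_hat M (ninit M) w \<inter> nfinal M \<noteq> {}}"

record dfa =
  dstates :: "nat set"
  ddelta  :: "nat \<Rightarrow> bool \<Rightarrow> nat"
  dinit   :: nat
  dfinal  :: "nat set"

definition is_dfa :: "dfa \<Rightarrow> bool" where
  "is_dfa D \<longleftrightarrow> finite (dstates D) \<and> dinit D \<in> dstates D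
     \<and> (\<forall>q\<in>dstates D. \<forall>a. ddelta D q a \<in> dstates D)
     \<and> dfinal D \<subseteq> dstates D"

fun ddelta_hat :: "dfa \<Rightarrow> nat \<Rightarrow> bool list \<Rightarrow> nat" where
  "ddelta_hat D q [] = q"
| "ddelta_hat D q (a # w) = ddelta_hat D (ddelta D q a) w"

definition dfa_lang :: "dfa \<Rightarrow> bool list set" where
  "dfa_lang D = {w. ddelta_hat D (dinit D) w \<in> dfinal D}"

definition min_dfa_states :: "bool list set \<Rightarrow> nat" where
  "min_dfa_states L = (LEAST k. \<exists>D. is_dfa D \<and> dfa_lang D = L \<and> card (dstates D) = k)"

end

theory Submission
  imports Defs
begin

text \<open>Place the n states on a cycle: the letter True rotates every state one step forward,
  the letter False kills state 0 and fixes all others. Rotating a state x to 0, reading False and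
  rotating back deletes exactly x from the current set of states, so from the full set every subset
  T is reachable, and deleting all states but x tests whether x is in T. Hence the 2^n subsets are
  pairwise distinguishable, while the subset construction shows 2^n states suffice.\<close>

lemma ndelta_hat_append: "ndelta_hat M S (u @ v) = ndelta_hat M (ndelta_hat M S u) v"
  by (induction u arbitrary: S) auto

lemma ddelta_hat_append: "ddelta_hat D q (u @ v) = ddelta_hat D (ddelta_hat D q u) v"
  by (induction u arbitrary: q) auto

lemma ddelta_hat_in_dstates: "is_dfa D \<Longrightarrow> q \<in> dstates D \<Longrightarrow> ddelta_hat D q w \<in> dstates D"
  by (induction w arbitrary: q) (auto simp: is_dfa_def)

lemma ndelta_hat_subset_nstates:
  "is_nfa M \<Longrightarrow> S \<subseteq> nstates M \<Longrightarrow> ndelta_hat M S w \<subseteq> nstates M"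
proof (induction w arbitrary: S)
  case (Cons a w)
  then have "(\<Union>q\<in>S. ndelta M q a) \<subseteq> nstates M"
    unfolding is_nfa_def by blast
  then show ?case using Cons by simp
qed simp

lemma subset_construction:
  assumes M: "is_nfa M"
  shows "\<exists>D. is_dfa D \<and> dfa_lang D = nfa_lang M \<and> card (dstates D) = 2 ^ card (nstates M)"
proof -
  let ?P = "Pow (nstates M)" and ?N = "{..<(2::nat) ^ card (nstates M)}"
  have "finite (nstates M)" using M by (simp add: is_nfa_def)
  then have "card ?P = card ?N" by (simp add: card_Pow)
  then obtain f where f: "bij_betw f ?P ?N"
    using finite_same_card_bij[of ?P ?N] \<open>finite (nstates M)\<close> by auto
  define g where "g = inv_into ?P f"
  have gf: "g (f S) = S" if "S \<in> ?P" for S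
    unfolding g_def using f that by (simp add: bij_betw_def)
  have fP: "f S \<in> ?N" if "S \<in> ?P" for S
    using f that by (auto simp: bij_betw_def)
  have gP: "g p \<in> ?P" if "p \<in> ?N" for p
    unfolding g_def using f that by (metis bij_betw_def inv_into_into)
  have step_in: "ndelta_hat M S w \<in> ?P" if "S \<in> ?P" for S w
    using ndelta_hat_subset_nstates[OF M] that by blast
  define D where "D = \<lparr>dstates = ?N, ddelta = (\<lambda>p a. f (ndelta_hat M (g p) [a])),
     dinit = f (ninit M), dfinal = {p \<in> ?N. g p \<inter> nfinal M \<noteq> {}}\<rparr>"
  have run: "ddelta_hat D (f S) w = f (ndelta_hat M S w)" if "S \<in> ?P" for S w
    using that
  proof (induction w arbitrary: S)
    case (Cons a w)
    then show ?case
      using step_in[OF Cons.prems, of "[a]"] ndelta_hat_append[of M S "[a]" w]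
      by (simp add: D_def gf)
  qed simp
  have init: "ninit M \<in> ?P" using M by (simp add: is_nfa_def)
  have "is_dfa D"
    unfolding is_dfa_def D_def using fP gP step_in[of _ "[_]"] init by auto
  moreover have "dfa_lang D = nfa_lang M"
    unfolding dfa_lang_def nfa_lang_def
    using run[OF init] fP[OF step_in[OF init]] gf[OF step_in[OF init]]
    by (auto simp: D_def)
  ultimately show ?thesis by (auto simp: D_def)
qed

lemma card_distinguishable_le_dstates:
  assumes D: "is_dfa D"
    and distinct: "\<And>a b. a \<in> A \<Longrightarrow> b \<in> A \<Longrightarrow> a \<noteq> b \<Longrightarrow>
                      \<exists>v. (r a @ v \<in> dfa_lang D) \<noteq> (r b @ v \<in> dfa_lang D)"
  shows "card A \<le> card (dstates D)"
proof -
  define s where "s a = ddelta_hat D (dinit D) (r a)" for a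
  have "inj_on s A"
  proof (rule inj_onI, rule ccontr)
    fix a b assume "a \<in> A" "b \<in> A" "s a = s b" "a \<noteq> b"
    then show False
      using distinct[of a b] by (simp add: s_def dfa_lang_def ddelta_hat_append)
  qed
  moreover have "s ` A \<subseteq> dstates D"
    unfolding s_def using D ddelta_hat_in_dstates by (auto simp: is_dfa_def)
  ultimately show ?thesis
    using card_inj_on_le D by (auto simp: is_dfa_def)
qed

lemma min_dfa_states_eqI:
  assumes "\<exists>D. is_dfa D \<and> dfa_lang D = L \<and> card (dstates D) = k"
    and "\<And>D. is_dfa D \<Longrightarrow> dfa_lang D = L \<Longrightarrow> k \<le> card (dstates D)"
  shows "min_dfa_states L = k"
  unfolding min_dfa_states_def using assms by (intro Least_equality) auto

definition cycle_nfa :: "nat \<Rightarrow> nfa" where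
  "cycle_nfa n = \<lparr>nstates = {..<n},
     ndelta = (\<lambda>q a. if a then {(q + 1) mod n} else if q = 0 then {} else {q}),
     ninit = {..<n}, nfinal = {..<n}\<rparr>"

lemma cycle_nfa_simps [simp]:
  "nstates (cycle_nfa n) = {..<n}" "ninit (cycle_nfa n) = {..<n}" "nfinal (cycle_nfa n) = {..<n}"
  "ndelta (cycle_nfa n) q a = (if a then {(q + 1) mod n} else if q = 0 then {} else {q})"
  by (simp_all add: cycle_nfa_def)

lemma is_nfa_cycle_nfa: "is_nfa (cycle_nfa n)"
  unfolding is_nfa_def by auto

lemma nfa_lang_cycle_nfa:
  "w \<in> nfa_lang (cycle_nfa n) \<longleftrightarrow> ndelta_hat (cycle_nfa n) {..<n} w \<noteq> {}"
  using ndelta_hat_subset_nstates[OF is_nfa_cycle_nfa, of "{..<n}" n w]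
  unfolding nfa_lang_def by auto

lemma ndelta_hat_cycle_nfa_False: "ndelta_hat (cycle_nfa n) S [False] = S - {0}"
  by auto

lemma ndelta_hat_cycle_nfa_rotate:
  "S \<subseteq> {..<n} \<Longrightarrow> ndelta_hat (cycle_nfa n) S (replicate k True) = (\<lambda>q. (q + k) mod n) ` S"
proof (induction k arbitrary: S)
  case 0
  then show ?case by (force simp: image_iff)
next
  case (Suc k)
  have "(\<Union>q\<in>S. ndelta (cycle_nfa n) q True) = (\<lambda>q. (q + 1) mod n) ` S"
    by auto
  moreover have "(\<lambda>q. (q + 1) mod n) ` S \<subseteq> {..<n}"
    using Suc.prems by auto
  ultimately show ?case
    using Suc.IH by (simp add: image_image mod_add_left_eq)
qed

definition delete_word :: "nat \<Rightarrow> nat \<Rightarrow> bool list" where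
  "delete_word n x = replicate (n - x) True @ [False] @ replicate x True"

lemma ndelta_hat_delete_word:
  assumes S: "S \<subseteq> {..<n}" and x: "x < n"
  shows "ndelta_hat (cycle_nfa n) S (delete_word n x) = S - {x}"
proof -
  let ?rot = "\<lambda>k q. (q + k) mod n"
  have rotate_back: "?rot x (?rot (n - x) q) = q" if "q < n" for q
    using that x by (simp add: mod_add_left_eq)
  then have inj: "inj_on (?rot (n - x)) {..<n}"
    by (intro inj_on_inverseI[where g = "?rot x"]) simp
  have "?rot (n - x) ` (S - {x}) = ?rot (n - x) ` S - ?rot (n - x) ` {x}"
    using S x by (intro inj_on_image_set_diff[OF inj]) auto
  also have "?rot (n - x) ` {x} = {0}" using x by simp
  finally have deleted: "?rot (n - x) ` S - {0} = ?rot (n - x) ` (S - {x})" ..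
  have restored: "?rot x ` ?rot (n - x) ` (S - {x}) = S - {x}"
  proof -
    have "?rot x ` ?rot (n - x) ` (S - {x}) = id ` (S - {x})"
      unfolding image_image using S by (intro image_cong) (auto simp: rotate_back)
    then show ?thesis by simp
  qed
  have rotated: "?rot (n - x) ` (S - {x}) \<subseteq> {..<n}" using x by auto
  show ?thesis
    unfolding delete_word_def ndelta_hat_append ndelta_hat_cycle_nfa_rotate[OF S]
      ndelta_hat_cycle_nfa_False deleted ndelta_hat_cycle_nfa_rotate[OF rotated] restored ..
qed

lemma ndelta_hat_delete_words:
  "S \<subseteq> {..<n} \<Longrightarrow> set xs \<subseteq> {..<n} \<Longrightarrow>
   ndelta_hat (cycle_nfa n) S (concat (map (delete_word n) xs)) = S - set xs"
proof (induction xs arbitrary: S)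
  case (Cons x xs)
  have "x < n" "S - {x} \<subseteq> {..<n}" "set xs \<subseteq> {..<n}" using Cons.prems by auto
  have "ndelta_hat (cycle_nfa n) S (concat (map (delete_word n) (x # xs)))
      = ndelta_hat (cycle_nfa n) (S - {x}) (concat (map (delete_word n) xs))"
    unfolding list.map concat.simps ndelta_hat_append
      ndelta_hat_delete_word[OF Cons.prems(1) \<open>x < n\<close>] ..
  also have "\<dots> = S - {x} - set xs"
    using Cons.IH \<open>S - {x} \<subseteq> {..<n}\<close> \<open>set xs \<subseteq> {..<n}\<close> .
  finally show ?case by auto
qed simp

lemma cycle_nfa_reaches_subset:
  "T \<subseteq> {..<n} \<Longrightarrow> \<exists>w. ndelta_hat (cycle_nfa n) {..<n} w = T"
  using ndelta_hat_delete_words[of "{..<n}" n "sorted_list_of_set ({..<n} - T)"] by auto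

lemma cycle_nfa_tests_state:
  assumes "T \<subseteq> {..<n}"
  shows "ndelta_hat (cycle_nfa n) T (concat (map (delete_word n) (removeAll x [0..<n]))) = T \<inter> {x}"
proof -
  have others: "set (removeAll x [0..<n]) = {..<n} - {x}" by auto
  have "ndelta_hat (cycle_nfa n) T (concat (map (delete_word n) (removeAll x [0..<n])))
      = T - set (removeAll x [0..<n])"
    using assms by (intro ndelta_hat_delete_words) auto
  also have "\<dots> = T \<inter> {x}" using assms others by blast
  finally show ?thesis .
qed

lemma dstates_ge_cycle_nfa:
  assumes D: "is_dfa D" "dfa_lang D = nfa_lang (cycle_nfa n)"
  shows "2 ^ n \<le> card (dstates D)"
proof -
  have "\<forall>T\<in>Pow {..<n}. \<exists>w. ndelta_hat (cycle_nfa n) {..<n} w = T"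
    using cycle_nfa_reaches_subset by blast
  then obtain r where r: "\<And>T. T \<in> Pow {..<n} \<Longrightarrow> ndelta_hat (cycle_nfa n) {..<n} (r T) = T"
    by (metis bchoice)
  have "card (Pow {..<n}) \<le> card (dstates D)"
  proof (rule card_distinguishable_le_dstates[OF D(1), where r = r])
    fix S T assume S: "S \<in> Pow {..<n}" and T: "T \<in> Pow {..<n}" and "S \<noteq> T"
    then obtain x where x: "x \<in> S \<longleftrightarrow> x \<notin> T" by blast
    let ?v = "concat (map (delete_word n) (removeAll x [0..<n]))"
    have "r S @ ?v \<in> dfa_lang D \<longleftrightarrow> x \<in> S" "r T @ ?v \<in> dfa_lang D \<longleftrightarrow> x \<in> T"
      using S T D(2) by (auto simp: nfa_lang_cycle_nfa ndelta_hat_append r cycle_nfa_tests_state)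
    then show "\<exists>v. (r S @ v \<in> dfa_lang D) \<noteq> (r T @ v \<in> dfa_lang D)"
      using x by blast
  qed
  then show ?thesis by (simp add: card_Pow)
qed

theorem mainTheorem12:
  fixes n :: nat
  assumes "n \<ge> 1"
  shows "\<exists>M. is_nfa M \<and> card (nstates M) = n
             \<and> ninit M = nstates M \<and> nfinal M = nstates M
             \<and> min_dfa_states (nfa_lang M) = 2 ^ n"
proof (intro exI[of _ "cycle_nfa n"] conjI)
  show "min_dfa_states (nfa_lang (cycle_nfa n)) = 2 ^ n"
  proof (rule min_dfa_states_eqI)
    show "\<exists>D. is_dfa D \<and> dfa_lang D = nfa_lang (cycle_nfa n) \<and> card (dstates D) = 2 ^ n"
      using subset_construction[OF is_nfa_cycle_nfa, of n] by simp
  qed (rule dstates_ge_cycle_nfa)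
qed (simp_all add: is_nfa_cycle_nfa)

end
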